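(* Let $\mathcal{X}$ be a finite channel input set with $|\mathcal{X}|=M=2^m$, let $\mathcal{Y}$ be the output set, and let $P_{Y|X}(y|x)$ be the transition density of a memoryless channel. Let $\mu:\mathbb{F}_2^m\to\mathcal{X}$ be a bijective labeling, and for $x\in\mathcal{X}$ and $j=1,\dots,m$ let $b_j(x)\in\{0,1\}$ be the $j$-th bit of the label of $x$. For $b\in\{0,1\}$ let $\mathcal{X}_b^j=\{x\in\mathcal{X}: b_j(x)=b\}$. Let $P_{B_1},\dots,P_{B_m}$ be probability distributions on $\{0,1\}$ and define $P_X^{\rm bicm}(x)=\prod_{j=1}^m P_{B_j}(b_j(x))$. Define the bit metrics $$q_j(b,y)=\sum_{x'\in\mathcal{X}_b^j}P_{Y|X}(y|x')P_X^{\rm bicm}(x'),$$ the symbol metric $q^{\rm bicm}(x,y)=\prod_{j=1}^m q_j(b_j(x),y)$, and the generalized mutual information $$R_{\rm gmi}=\sup_{s>0}\ \mathbb{E}\left[\log\frac{q^{\rm bicm}(X,Y)^s}{\sum_{x'\in\mathcal{X}}q^{\rm bicm}(x',Y)^sP_X^{\rm bicm}(x')}\right],$$ where the expectation is with respect to the joint distribution $P_X^{\rm bicm}(x)P_{Y|X}(y|x)$. Then $$R_{\rm gmi}=\sup_{s>0}\left(\sum_{j=1}^m\mathbb{E}\left[\log\frac{q_j(B_j,Y)^s}{\sum_{b'\in\{0,1\}}q_j(b',Y)^sP_{B_j}(b')}\right]\right),$$ where, for each $j$, the expectation is with respect to the joint distribution $P_{B_j}(b)P_j(y|b)$ with $$P_j(y|b)=\sum_{x\in\mathcal{X}_b^j}\frac{P_{Y|X}(y|x)P_X^{\rm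 bicm}(x)}{\sum_{x'\in\mathcal{X}_b^j}P_X^{\rm bicm}(x')}\quad(\text{for } b \text{ with } P_{B_j}(b)>0).$$ Equivalently, $$R_{\rm gmi}=\sup_{s>0}\left(\sum_{j=1}^m\mathbb{E}\left[\log\frac{q_j(b_j(X),Y)^s}{\sum_{b'\in\{0,1\}}q_j(b',Y)^sP_{B_j}(b')}\right]\right),$$ where the expectation is with respect to $P_X^{\rm bicm}(x)P_{Y|X}(y|x)$.
   Context: This is the setting of bit-interleaved coded modulation (BICM) with possibly non-equiprobable ("shaped") bits: the $m$ label bits of each transmitted symbol are independent with distributions $P_{B_j}$, and the decoder uses the metric $q^{\rm bicm}$, which treats the bits as independent. Logarithms are natural. *)

theory Defs
  imports "HOL-Probability.Probability"
begin

text \<open>Bit-label vectors in F_2^m: functions {1..m} -> bool (True = bit 1), extensional.\<close>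
definition bitvecs :: "nat \<Rightarrow> (nat \<Rightarrow> bool) set" where
  "bitvecs m = ({1..m} \<rightarrow>\<^sub>E (UNIV :: bool set))"

definition lbit :: "nat \<Rightarrow> ((nat \<Rightarrow> bool) \<Rightarrow> 'x) \<Rightarrow> nat \<Rightarrow> 'x \<Rightarrow> bool" where
  "lbit m mu j x = the_inv_into (bitvecs m) mu x j"

definition Xbj :: "'x set \<Rightarrow> nat \<Rightarrow> ((nat \<Rightarrow> bool) \<Rightarrow> 'x) \<Rightarrow> nat \<Rightarrow> bool \<Rightarrow> 'x set" where
  "Xbj X m mu j b = {x \<in> X. lbit m mu j x = b}"

definition PXbicm :: "nat \<Rightarrow> ((nat \<Rightarrow> bool) \<Rightarrow> 'x) \<Rightarrow> (nat \<Rightarrow> bool pmf) \<Rightarrow> 'x \<Rightarrow> real" where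
  "PXbicm m mu PB x = (\<Prod>j\<in>{1..m}. pmf (PB j) (lbit m mu j x))"

definition qbit :: "'x set \<Rightarrow> nat \<Rightarrow> ((nat \<Rightarrow> bool) \<Rightarrow> 'x) \<Rightarrow> (nat \<Rightarrow> bool pmf)
    \<Rightarrow> ('x \<Rightarrow> 'y \<Rightarrow> real) \<Rightarrow> nat \<Rightarrow> bool \<Rightarrow> 'y \<Rightarrow> real" where
  "qbit X m mu PB W j b y = (\<Sum>x'\<in>Xbj X m mu j b. W x' y * PXbicm m mu PB x')"

definition qbicm :: "'x set \<Rightarrow> nat \<Rightarrow> ((nat \<Rightarrow> bool) \<Rightarrow> 'x) \<Rightarrow> (nat \<Rightarrow> bool pmf)
    \<Rightarrow> ('x \<Rightarrow> 'y \<Rightarrow> real) \<Rightarrow> 'x \<Rightarrow> 'y \<Rightarrow> real" where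
  "qbicm X m mu PB W x y = (\<Prod>j\<in>{1..m}. qbit X m mu PB W j (lbit m mu j x) y)"

text \<open>P_j(y|b) (division by zero gives 0, i.e. irrelevant when P_Bj(b) = 0)\<close>
definition Pbit :: "'x set \<Rightarrow> nat \<Rightarrow> ((nat \<Rightarrow> bool) \<Rightarrow> 'x) \<Rightarrow> (nat \<Rightarrow> bool pmf)
    \<Rightarrow> ('x \<Rightarrow> 'y \<Rightarrow> real) \<Rightarrow> nat \<Rightarrow> bool \<Rightarrow> 'y \<Rightarrow> real" where
  "Pbit X m mu PB W j b y = (\<Sum>x\<in>Xbj X m mu j b.
       W x y * PXbicm m mu PB x / (\<Sum>x'\<in>Xbj X m mu j b. PXbicm m mu PB x'))"

text \<open>Joint distribution P_X^bicm(x) P_{Y|X}(y|x) on X x Y (N = reference measure on Y).\<close>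
definition joint_sym :: "'x set \<Rightarrow> nat \<Rightarrow> ((nat \<Rightarrow> bool) \<Rightarrow> 'x) \<Rightarrow> (nat \<Rightarrow> bool pmf)
    \<Rightarrow> ('x \<Rightarrow> 'y \<Rightarrow> real) \<Rightarrow> 'y measure \<Rightarrow> ('x \<times> 'y) measure" where
  "joint_sym X m mu PB W N = density (count_space X \<Otimes>\<^sub>M N)
       (\<lambda>(x,y). ennreal (PXbicm m mu PB x * W x y))"

definition joint_bit :: "'x set \<Rightarrow> nat \<Rightarrow> ((nat \<Rightarrow> bool) \<Rightarrow> 'x) \<Rightarrow> (nat \<Rightarrow> bool pmf)
    \<Rightarrow> ('x \<Rightarrow> 'y \<Rightarrow> real) \<Rightarrow> 'y measure \<Rightarrow> nat \<Rightarrow> (bool \<times> 'y) measure" where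
  "joint_bit X m mu PB W N j = density (count_space UNIV \<Otimes>\<^sub>M N)
       (\<lambda>(b,y). ennreal (pmf (PB j) b * Pbit X m mu PB W j b y))"

text \<open>Extended-real expectation: E[f] = E[f^+] - E[f^-], valued in ereal
  (well defined in [-infinity, c] for the integrands here, which are bounded above).\<close>
definition eexpect :: "'a measure \<Rightarrow> ('a \<Rightarrow> real) \<Rightarrow> ereal" where
  "eexpect M f = enn2ereal (\<integral>\<^sup>+ z. ennreal (f z) \<partial>M) - enn2ereal (\<integral>\<^sup>+ z. ennreal (- f z) \<partial>M)"

definition Rgmi :: "'x set \<Rightarrow> nat \<Rightarrow> ((nat \<Rightarrow> bool) \<Rightarrow> 'x) \<Rightarrow> (nat \<Rightarrow> bool pmf)
    \<Rightarrow> ('x \<Rightarrow> 'y \<Rightarrow> real) \<Rightarrow> 'y measure \<Rightarrow> ereal" where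
  "Rgmi X m mu PB W N = (SUP s\<in>{0<..}. eexpect (joint_sym X m mu PB W N)
      (\<lambda>(x,y). ln (qbicm X m mu PB W x y powr s /
         (\<Sum>x'\<in>X. qbicm X m mu PB W x' y powr s * PXbicm m mu PB x'))))"

end

theory Submission
  imports Defs
begin

text \<open>Since the label bits are independent under P_X^bicm, both q^bicm(x,y)^s and the
  normaliser sum_x' q^bicm(x',y)^s P_X^bicm(x') factor over the label positions; hence,
  wherever P_X^bicm(x) W(y|x) > 0, the symbol-wise GMI integrand is the sum of the m bit-wise
  ones. Each bit-wise integrand is at most -log P_Bj(b_j(x)), so its positive part is
  integrable and the expectation of the sum is the sum of the expectations, also when some
  of them are -\<infinity>. Finally P_Bj(b) P_j(y|b) = q_j(b,y) = sum over x in X_b^j of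
  P_X^bicm(x) W(y|x), so (b_j(X), Y) has the joint law P_Bj(b) P_j(y|b), which turns the
  second form of the rate into the first.\<close>

lemma nn_integral_density_pair_count_space_finite:
  fixes d f :: "'a \<times> 'b \<Rightarrow> ennreal"
  assumes A: "finite A" and sf: "sigma_finite_measure N"
    and d: "\<And>x. x \<in> A \<Longrightarrow> (\<lambda>y. d (x, y)) \<in> borel_measurable N"
    and f: "\<And>x. x \<in> A \<Longrightarrow> (\<lambda>y. f (x, y)) \<in> borel_measurable N"
  shows "(\<integral>\<^sup>+ z. f z \<partial>density (count_space A \<Otimes>\<^sub>M N) d) = (\<Sum>x\<in>A. \<integral>\<^sup>+ y. d (x, y) * f (x, y) \<partial>N)"
proof -
  have meas: "g \<in> borel_measurable (count_space A \<Otimes>\<^sub>M N)"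
    if "\<And>x. x \<in> A \<Longrightarrow> (\<lambda>y. g (x, y)) \<in> borel_measurable N" for g :: "'a \<times> 'b \<Rightarrow> ennreal"
    by (rule measurable_pair_measure_countable1) (use A that countable_finite in auto)
  have "(\<integral>\<^sup>+ z. f z \<partial>density (count_space A \<Otimes>\<^sub>M N) d) = (\<integral>\<^sup>+ z. d z * f z \<partial>(count_space A \<Otimes>\<^sub>M N))"
    by (rule nn_integral_density) (use d f in \<open>auto intro: meas\<close>)
  also have "\<dots> = (\<integral>\<^sup>+ x. \<integral>\<^sup>+ y. d (x, y) * f (x, y) \<partial>N \<partial>count_space A)"
    by (rule sigma_finite_measure.nn_integral_fst[OF sf, symmetric]) (use d f in \<open>auto intro: meas\<close>)
  also have "\<dots> = (\<Sum>x\<in>A. \<integral>\<^sup>+ y. d (x, y) * f (x, y) \<partial>N)"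
    by (rule nn_integral_count_space_finite[OF A])
  finally show ?thesis .
qed

lemma ennreal_sum_pos_neg_balance:
  fixes a :: real and b :: "'j \<Rightarrow> real"
  assumes "finite J" "a = (\<Sum>j\<in>J. b j)"
  shows "ennreal a + (\<Sum>j\<in>J. ennreal (- b j)) = ennreal (- a) + (\<Sum>j\<in>J. ennreal (b j))"
proof -
  have pos_part: "\<And>t::real. ennreal t = ennreal (max t 0)"
    by (metis ennreal_neg max.absorb1 max.absorb2 nle_le)
  have sum_pos_part: "(\<Sum>j\<in>J. ennreal (c j)) = ennreal (\<Sum>j\<in>J. max (c j) 0)" for c :: "'j \<Rightarrow> real"
    by (subst sum_ennreal[symmetric]) (auto intro: sum.cong pos_part)
  have "max a 0 + (\<Sum>j\<in>J. max (- b j) 0) = max (- a) 0 + (\<Sum>j\<in>J. max (b j) 0)"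
  proof -
    have "(\<Sum>j\<in>J. max (b j) 0) = (\<Sum>j\<in>J. b j + max (- b j) 0)"
      by (intro sum.cong) auto
    also have "\<dots> = a + (\<Sum>j\<in>J. max (- b j) 0)" by (simp add: sum.distrib assms(2))
    finally show ?thesis by auto
  qed
  then show ?thesis
    by (simp only: sum_pos_part pos_part[of a] pos_part[of "- a"] ennreal_plus[symmetric]
        max.cobounded2 sum_nonneg)
qed

lemma enn2ereal_diff_eq_sum_diff:
  fixes x y :: ennreal and u v :: "'j \<Rightarrow> ennreal"
  assumes J: "finite J" and balance: "x + (\<Sum>j\<in>J. v j) = y + (\<Sum>j\<in>J. u j)"
    and x: "x < \<infinity>" and u: "\<And>j. j \<in> J \<Longrightarrow> u j < \<infinity>"
  shows "enn2ereal x - enn2ereal y = (\<Sum>j\<in>J. enn2ereal (u j) - enn2ereal (v j))"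
proof (cases "\<forall>j\<in>J. v j < \<infinity>")
  case True
  have y: "y < \<infinity>"
    using balance x True J by (metis ennreal_add_eq_top ennreal_sum_less_top infinity_ennreal_def less_top)
  have fin: "enn2ereal z = ereal (enn2real z)" if "z < \<infinity>" for z
    using that by (metis enn2ereal_ennreal enn2real_nonneg ennreal_enn2real infinity_ennreal_def)
  have "enn2real (x + (\<Sum>j\<in>J. v j)) = enn2real (y + (\<Sum>j\<in>J. u j))"
    using balance by simp
  then have "enn2real x + (\<Sum>j\<in>J. enn2real (v j)) = enn2real y + (\<Sum>j\<in>J. enn2real (u j))"
    using x y u True J by (simp add: enn2real_plus enn2real_sum less_top)
  then show ?thesis
    using x y u True by (simp add: fin sum_subtractf)
next
  case False
  then obtain k where k: "k \<in> J" "v k = \<infinity>" using less_top by auto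
  have "(\<Sum>j\<in>J. v j) = \<infinity>"
    using k J by (metis ennreal_sum_less_top infinity_ennreal_def less_top)
  moreover have "(\<Sum>j\<in>J. u j) < \<infinity>" using u J by (simp add: less_top)
  ultimately have "y = \<infinity>"
    using balance by (metis ennreal_add_eq_top infinity_ennreal_def less_top top_neq_ennreal)
  then have lhs: "enn2ereal x - enn2ereal y = - \<infinity>"
    using x by (cases "enn2ereal x") (auto simp: infinity_ennreal_def)
  have "enn2ereal (u j) - enn2ereal (v j) \<noteq> \<infinity>" if "j \<in> J" for j
    using u[OF that] enn2ereal_nonneg[of "v j"]
    by (cases "enn2ereal (u j)"; cases "enn2ereal (v j)") (auto simp: infinity_ennreal_def)
  then have rest: "(\<Sum>j\<in>J - {k}. enn2ereal (u j) - enn2ereal (v j)) \<noteq> \<infinity>"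
    by (simp add: sum_Pinfty)
  have "enn2ereal (u k) - enn2ereal (v k) = - \<infinity>"
    using u[OF k(1)] k(2) by (cases "enn2ereal (u k)") (auto simp: infinity_ennreal_def)
  then have "(\<Sum>j\<in>J. enn2ereal (u j) - enn2ereal (v j)) = - \<infinity>"
    using rest J k(1) by (simp add: sum.remove)
  then show ?thesis using lhs by simp
qed

lemma nn_integral_pos_neg_balance:
  fixes g :: "'a \<Rightarrow> real" and f :: "'j \<Rightarrow> 'a \<Rightarrow> real"
  assumes J: "finite J"
    and g: "g \<in> borel_measurable M" and f: "\<And>j. j \<in> J \<Longrightarrow> f j \<in> borel_measurable M"
    and ae: "AE z in M. g z = (\<Sum>j\<in>J. f j z)"
  shows "(\<integral>\<^sup>+ z. ennreal (g z) \<partial>M) + (\<Sum>j\<in>J. \<integral>\<^sup>+ z. ennreal (- f j z) \<partial>M)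
       = (\<integral>\<^sup>+ z. ennreal (- g z) \<partial>M) + (\<Sum>j\<in>J. \<integral>\<^sup>+ z. ennreal (f j z) \<partial>M)"
proof -
  have "(\<integral>\<^sup>+ z. ennreal (g z) \<partial>M) + (\<Sum>j\<in>J. \<integral>\<^sup>+ z. ennreal (- f j z) \<partial>M)
      = (\<integral>\<^sup>+ z. ennreal (g z) + (\<Sum>j\<in>J. ennreal (- f j z)) \<partial>M)"
    using g f by (subst nn_integral_add) (auto simp: nn_integral_sum)
  also have "\<dots> = (\<integral>\<^sup>+ z. ennreal (- g z) + (\<Sum>j\<in>J. ennreal (f j z)) \<partial>M)"
    by (rule nn_integral_cong_AE) (use ae in \<open>auto intro: ennreal_sum_pos_neg_balance[OF J]\<close>)
  also have "\<dots> = (\<integral>\<^sup>+ z. ennreal (- g z) \<partial>M) + (\<Sum>j\<in>J. \<integral>\<^sup>+ z. ennreal (f j z) \<partial>M)"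
    using g f by (subst nn_integral_add) (auto simp: nn_integral_sum)
  finally show ?thesis .
qed

text \<open>Only the positive parts need to be integrable: then both sides may be \<open>-\<infinity>\<close>.\<close>

lemma eexpect_sum:
  fixes g :: "'a \<Rightarrow> real" and f :: "'j \<Rightarrow> 'a \<Rightarrow> real"
  assumes J: "finite J"
    and g: "g \<in> borel_measurable M" and f: "\<And>j. j \<in> J \<Longrightarrow> f j \<in> borel_measurable M"
    and ae: "AE z in M. g z = (\<Sum>j\<in>J. f j z)"
    and pos_finite: "\<And>j. j \<in> J \<Longrightarrow> (\<integral>\<^sup>+ z. ennreal (f j z) \<partial>M) < \<infinity>"
  shows "eexpect M g = (\<Sum>j\<in>J. eexpect M (f j))"
proof -
  have "(\<integral>\<^sup>+ z. ennreal (g z) \<partial>M) \<le> (\<integral>\<^sup>+ z. (\<Sum>j\<in>J. ennreal (f j z)) \<partial>M)"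
  proof (rule nn_integral_mono_AE)
    show "AE z in M. ennreal (g z) \<le> (\<Sum>j\<in>J. ennreal (f j z))"
      using ae
    proof eventually_elim
      case (elim z)
      have "ennreal (g z) \<le> ennreal (\<Sum>j\<in>J. max (f j z) 0)"
        using elim by (auto intro!: ennreal_leI sum_mono)
      also have "\<dots> = (\<Sum>j\<in>J. ennreal (max (f j z) 0))" by (rule sum_ennreal[symmetric]) simp
      also have "\<dots> = (\<Sum>j\<in>J. ennreal (f j z))"
        by (intro sum.cong refl) (metis ennreal_neg max.absorb1 max.absorb2 nle_le)
      finally show ?case .
    qed
  qed
  also have "\<dots> = (\<Sum>j\<in>J. \<integral>\<^sup>+ z. ennreal (f j z) \<partial>M)" using f by (simp add: nn_integral_sum)
  also have "\<dots> < \<infinity>" using pos_finite J by (simp add: less_top)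
  finally have g_pos_finite: "(\<integral>\<^sup>+ z. ennreal (g z) \<partial>M) < \<infinity>" .
  show ?thesis
    unfolding eexpect_def
    by (rule enn2ereal_diff_eq_sum_diff[OF J nn_integral_pos_neg_balance[OF J g f ae]
          g_pos_finite pos_finite])
qed

locale bicm_channel =
  fixes X :: "'x set" and m :: nat and mu :: "(nat \<Rightarrow> bool) \<Rightarrow> 'x"
    and PB :: "nat \<Rightarrow> bool pmf" and N :: "'y measure" and W :: "'x \<Rightarrow> 'y \<Rightarrow> real"
  assumes labeling: "bij_betw mu (bitvecs m) X"
    and sigma_finite: "sigma_finite_measure N"
    and W_measurable: "\<And>x. x \<in> X \<Longrightarrow> W x \<in> borel_measurable N"
    and W_nonneg: "\<And>x y. x \<in> X \<Longrightarrow> y \<in> space N \<Longrightarrow> 0 \<le> W x y"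
    and W_prob: "\<And>x. x \<in> X \<Longrightarrow> (\<integral>\<^sup>+ y. ennreal (W x y) \<partial>N) = 1"
begin

abbreviation "P x \<equiv> PXbicm m mu PB x"
abbreviation "lb j x \<equiv> lbit m mu j x"
abbreviation "q j b y \<equiv> qbit X m mu PB W j b y"

abbreviation bit_gmi_integrand :: "nat \<Rightarrow> real \<Rightarrow> bool \<Rightarrow> 'y \<Rightarrow> real" where
  "bit_gmi_integrand j s b y \<equiv> ln (q j b y powr s / (\<Sum>b'\<in>UNIV. q j b' y powr s * pmf (PB j) b'))"

abbreviation symbol_gmi_integrand :: "real \<Rightarrow> 'x \<Rightarrow> 'y \<Rightarrow> real" where
  "symbol_gmi_integrand s x y \<equiv> ln (qbicm X m mu PB W x y powr s /
     (\<Sum>x'\<in>X. qbicm X m mu PB W x' y powr s * P x'))"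

lemma finite_symbols: "finite X"
proof -
  have "finite (bitvecs m)" unfolding bitvecs_def by (intro finite_PiE) auto
  then show ?thesis using labeling bij_betw_finite by blast
qed

lemma lbit_mu: "v \<in> bitvecs m \<Longrightarrow> lb j (mu v) = v j"
  unfolding lbit_def using labeling by (simp add: bij_betw_def the_inv_into_f_f)

lemma sum_symbols_prod_bits:
  fixes g :: "nat \<Rightarrow> bool \<Rightarrow> real"
  shows "(\<Sum>x\<in>X. \<Prod>i\<in>{1..m}. g i (lb i x)) = (\<Prod>i\<in>{1..m}. \<Sum>c\<in>UNIV. g i c)"
proof -
  have "(\<Sum>x\<in>X. \<Prod>i\<in>{1..m}. g i (lb i x)) = (\<Sum>v\<in>bitvecs m. \<Prod>i\<in>{1..m}. g i (v i))"
    using labeling by (simp add: sum.reindex_bij_betw[symmetric] lbit_mu cong: prod.cong)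
  also have "\<dots> = (\<Prod>i\<in>{1..m}. \<Sum>c\<in>UNIV. g i c)"
    unfolding bitvecs_def using prod_sum_PiE[of "{1..m}" "\<lambda>_. UNIV" g] by simp
  finally show ?thesis .
qed

lemma PXbicm_nonneg: "0 \<le> P x"
  unfolding PXbicm_def by (intro prod_nonneg) auto

lemma PXbicm_eq_0: "j \<in> {1..m} \<Longrightarrow> pmf (PB j) (lb j x) = 0 \<Longrightarrow> P x = 0"
  unfolding PXbicm_def by (intro prod_zero) auto

lemma sum_PXbicm_Xbj:
  assumes j: "j \<in> {1..m}"
  shows "(\<Sum>x\<in>Xbj X m mu j b. P x) = pmf (PB j) b"
proof -
  define g where "g i c = (if i = j \<and> c \<noteq> b then 0 else pmf (PB i) c)" for i c
  have "(\<Sum>x\<in>Xbj X m mu j b. P x) = (\<Sum>x\<in>X. if lb j x = b then P x else 0)"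
    unfolding Xbj_def using finite_symbols by (simp add: sum.inter_filter)
  also have "\<dots> = (\<Sum>x\<in>X. \<Prod>i\<in>{1..m}. g i (lb i x))"
  proof (intro sum.cong refl)
    fix x
    have "(\<Prod>i\<in>{1..m}. g i (lb i x))
        = P x * (\<Prod>i\<in>{1..m}. if i = j \<and> lb i x \<noteq> b then 0 else 1)"
      unfolding g_def PXbicm_def prod.distrib[symmetric] by (intro prod.cong refl) auto
    also have "(\<Prod>i\<in>{1..m}. if i = j \<and> lb i x \<noteq> b then 0 else 1) = (if lb j x = b then 1 else (0::real))"
      using j by (auto intro!: prod.neutral)
    finally show "(if lb j x = b then P x else 0) = (\<Prod>i\<in>{1..m}. g i (lb i x))" by simp
  qed
  also have "\<dots> = (\<Prod>i\<in>{1..m}. \<Sum>c\<in>UNIV. g i c)" by (rule sum_symbols_prod_bits)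
  also have "\<dots> = (\<Prod>i\<in>{1..m}. if i = j then pmf (PB j) b else 1)"
  proof (intro prod.cong refl)
    fix i
    show "(\<Sum>c\<in>UNIV. g i c) = (if i = j then pmf (PB j) b else 1)"
    proof (cases "i = j")
      case True
      then show ?thesis unfolding g_def UNIV_bool by (cases b) auto
    next
      case False
      then show ?thesis unfolding g_def by (simp add: sum_pmf_eq_1)
    qed
  qed
  also have "\<dots> = pmf (PB j) b" using j by (simp add: prod.delta)
  finally show ?thesis .
qed

lemma pmf_mult_Pbit:
  assumes j: "j \<in> {1..m}"
  shows "pmf (PB j) b * Pbit X m mu PB W j b y = q j b y"
proof (cases "pmf (PB j) b = 0")
  case True
  then have "q j b y = 0"
    unfolding qbit_def using PXbicm_eq_0[OF j] by (auto simp: Xbj_def intro!: sum.neutral)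
  then show ?thesis using True by simp
next
  case False
  then show ?thesis
    unfolding Pbit_def qbit_def sum_PXbicm_Xbj[OF j] by (simp add: sum_divide_distrib[symmetric])
qed

lemma qbit_measurable[measurable]: "(\<lambda>y. q j b y) \<in> borel_measurable N"
  unfolding qbit_def
  by (intro borel_measurable_sum borel_measurable_times borel_measurable_const)
    (auto simp: Xbj_def intro: W_measurable)

lemma qbicm_measurable[measurable]: "(\<lambda>y. qbicm X m mu PB W x y) \<in> borel_measurable N"
  unfolding qbicm_def by measurable

lemma sum_qbicm_powr:
  "(\<Sum>x'\<in>X. qbicm X m mu PB W x' y powr s * P x')
     = (\<Prod>j\<in>{1..m}. \<Sum>b'\<in>UNIV. q j b' y powr s * pmf (PB j) b')"
proof -
  have "(\<Sum>x'\<in>X. qbicm X m mu PB W x' y powr s * P x')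
      = (\<Sum>x'\<in>X. \<Prod>j\<in>{1..m}. q j (lb j x') y powr s * pmf (PB j) (lb j x'))"
    unfolding qbicm_def PXbicm_def by (simp add: prod_powr_distrib prod.distrib)
  then show ?thesis
    using sum_symbols_prod_bits[of "\<lambda>j b'. q j b' y powr s * pmf (PB j) b'"] by simp
qed

lemma nn_integral_joint_sym:
  assumes "\<And>x. x \<in> X \<Longrightarrow> (\<lambda>y. f (x, y)) \<in> borel_measurable N"
  shows "(\<integral>\<^sup>+ z. f z \<partial>joint_sym X m mu PB W N) = (\<Sum>x\<in>X. \<integral>\<^sup>+ y. ennreal (P x * W x y) * f (x, y) \<partial>N)"
  unfolding joint_sym_def
  by (subst nn_integral_density_pair_count_space_finite[OF finite_symbols sigma_finite])
    (use assms W_measurable in auto)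

lemma nn_integral_joint_bit:
  assumes j: "j \<in> {1..m}" and f: "\<And>b. (\<lambda>y. f (b, y)) \<in> borel_measurable N"
  shows "(\<integral>\<^sup>+ z. f z \<partial>joint_bit X m mu PB W N j) = (\<Sum>b\<in>UNIV. \<integral>\<^sup>+ y. ennreal (q j b y) * f (b, y) \<partial>N)"
  unfolding joint_bit_def
  by (subst nn_integral_density_pair_count_space_finite[OF _ sigma_finite])
    (use f in \<open>auto simp: pmf_mult_Pbit[OF j]\<close>)

lemma nn_integral_joint_sym_lbit:
  assumes f: "\<And>b. (\<lambda>y. f (b, y)) \<in> borel_measurable N"
  shows "(\<integral>\<^sup>+ z. f (lb j (fst z), snd z) \<partial>joint_sym X m mu PB W N)
       = (\<Sum>b\<in>UNIV. \<integral>\<^sup>+ y. ennreal (q j b y) * f (b, y) \<partial>N)"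
proof -
  have "(\<integral>\<^sup>+ z. f (lb j (fst z), snd z) \<partial>joint_sym X m mu PB W N)
      = (\<Sum>x\<in>X. \<integral>\<^sup>+ y. ennreal (P x * W x y) * f (lb j x, y) \<partial>N)"
    using f by (simp add: nn_integral_joint_sym)
  also have "\<dots> = (\<Sum>b\<in>UNIV. \<Sum>x\<in>Xbj X m mu j b. \<integral>\<^sup>+ y. ennreal (P x * W x y) * f (lb j x, y) \<partial>N)"
    unfolding Xbj_def by (rule sum.group[symmetric]) (auto simp: finite_symbols)
  also have "\<dots> = (\<Sum>b\<in>UNIV. \<Sum>x\<in>Xbj X m mu j b. \<integral>\<^sup>+ y. ennreal (P x * W x y) * f (b, y) \<partial>N)"
    by (intro sum.cong refl) (auto simp: Xbj_def)
  also have "\<dots> = (\<Sum>b\<in>UNIV. \<integral>\<^sup>+ y. ennreal (q j b y) * f (b, y) \<partial>N)"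
  proof (intro sum.cong refl)
    fix b
    have "(\<Sum>x\<in>Xbj X m mu j b. \<integral>\<^sup>+ y. ennreal (P x * W x y) * f (b, y) \<partial>N)
        = (\<integral>\<^sup>+ y. (\<Sum>x\<in>Xbj X m mu j b. ennreal (P x * W x y)) * f (b, y) \<partial>N)"
      using f W_measurable by (subst nn_integral_sum[symmetric]) (auto simp: Xbj_def sum_distrib_right)
    also have "\<dots> = (\<integral>\<^sup>+ y. ennreal (q j b y) * f (b, y) \<partial>N)"
    proof (rule nn_integral_cong)
      fix y assume "y \<in> space N"
      then have "(\<Sum>x\<in>Xbj X m mu j b. ennreal (P x * W x y)) = ennreal (q j b y)"
        unfolding qbit_def
        by (subst sum_ennreal) (auto simp: Xbj_def mult.commute intro!: mult_nonneg_nonneg PXbicm_nonneg W_nonneg)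
      then show "(\<Sum>x\<in>Xbj X m mu j b. ennreal (P x * W x y)) * f (b, y) = ennreal (q j b y) * f (b, y)"
        by simp
    qed
    finally show "(\<Sum>x\<in>Xbj X m mu j b. \<integral>\<^sup>+ y. ennreal (P x * W x y) * f (b, y) \<partial>N)
        = (\<integral>\<^sup>+ y. ennreal (q j b y) * f (b, y) \<partial>N)" .
  qed
  finally show ?thesis .
qed

lemma eexpect_joint_bit_eq_joint_sym:
  assumes j: "j \<in> {1..m}" and phi: "\<And>b. (\<lambda>y. phi (b, y)) \<in> borel_measurable N"
  shows "eexpect (joint_bit X m mu PB W N j) phi
       = eexpect (joint_sym X m mu PB W N) (\<lambda>z. phi (lb j (fst z), snd z))"
proof -
  have pos: "\<And>b. (\<lambda>y. ennreal (phi (b, y))) \<in> borel_measurable N"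
    and neg: "\<And>b. (\<lambda>y. ennreal (- phi (b, y))) \<in> borel_measurable N"
    using phi by auto
  show ?thesis
    unfolding eexpect_def
    by (simp only: nn_integral_joint_bit[OF j pos] nn_integral_joint_bit[OF j neg]
        nn_integral_joint_sym_lbit[OF pos] nn_integral_joint_sym_lbit[OF neg])
qed

lemma pmf_lbit_pos: "0 < P x \<Longrightarrow> j \<in> {1..m} \<Longrightarrow> 0 < pmf (PB j) (lb j x)"
  using PXbicm_eq_0[of j x] pmf_nonneg[of "PB j" "lb j x"] by fastforce

lemma qbit_lbit_pos:
  assumes x: "x \<in> X" and y: "y \<in> space N" and pos: "0 < P x * W x y"
  shows "0 < q j (lb j x) y"
proof -
  have "W x y * P x \<le> q j (lb j x) y"
    unfolding qbit_def using x finite_symbols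
    by (intro member_le_sum) (auto simp: Xbj_def intro!: mult_nonneg_nonneg W_nonneg[OF _ y] PXbicm_nonneg)
  then show ?thesis using pos by (simp add: mult.commute)
qed

lemma bit_ratio_bounds:
  fixes s :: real
  assumes x: "x \<in> X" and y: "y \<in> space N" and pos: "0 < P x * W x y" and j: "j \<in> {1..m}"
  defines "r \<equiv> q j (lb j x) y powr s / (\<Sum>b'\<in>UNIV. q j b' y powr s * pmf (PB j) b')"
  shows "0 < r" and "r \<le> 1 / pmf (PB j) (lb j x)"
proof -
  define p where "p = pmf (PB j) (lb j x)"
  define Q where "Q = q j (lb j x) y powr s"
  define D where "D = (\<Sum>b'\<in>UNIV. q j b' y powr s * pmf (PB j) b')"
  have p: "0 < p" unfolding p_def using pmf_lbit_pos[OF _ j] pos PXbicm_nonneg W_nonneg[OF x y]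
    by (simp add: zero_less_mult_iff)
  have Q: "0 < Q" unfolding Q_def using qbit_lbit_pos[OF x y pos, of j] by simp
  have QD: "Q * p \<le> D" unfolding Q_def D_def p_def by (rule member_le_sum) auto
  then have D: "0 < D" using Q p by (meson less_le_trans mult_pos_pos)
  show "0 < r" unfolding r_def Q_def[symmetric] D_def[symmetric] using Q D by simp
  show "r \<le> 1 / pmf (PB j) (lb j x)"
    unfolding r_def Q_def[symmetric] D_def[symmetric] p_def[symmetric] using QD p D
    by (simp add: field_simps)
qed

lemma symbol_gmi_integrand_eq_sum:
  assumes x: "x \<in> X" and y: "y \<in> space N" and pos: "0 < P x * W x y"
  shows "symbol_gmi_integrand s x y = (\<Sum>j\<in>{1..m}. bit_gmi_integrand j s (lb j x) y)"
proof -
  have factor: "qbicm X m mu PB W x y powr s / (\<Sum>x'\<in>X. qbicm X m mu PB W x' y powr s * P x')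
      = (\<Prod>j\<in>{1..m}. q j (lb j x) y powr s / (\<Sum>b'\<in>UNIV. q j b' y powr s * pmf (PB j) b'))"
  proof -
    have "qbicm X m mu PB W x y powr s = (\<Prod>j\<in>{1..m}. q j (lb j x) y powr s)"
      unfolding qbicm_def by (simp add: prod_powr_distrib)
    then show ?thesis by (simp only: sum_qbicm_powr prod_dividef)
  qed
  show ?thesis
    unfolding factor
    by (rule ln_prod) (simp, metis bit_ratio_bounds(1)[OF x y pos] less_irrefl)
qed

lemma bit_gmi_integrand_le:
  assumes x: "x \<in> X" and y: "y \<in> space N" and pos: "0 < P x * W x y" and j: "j \<in> {1..m}"
  shows "bit_gmi_integrand j s (lb j x) y \<le> - ln (pmf (PB j) (lb j x))"
proof -
  have p: "0 < pmf (PB j) (lb j x)"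
    using pmf_lbit_pos[OF _ j] pos PXbicm_nonneg W_nonneg[OF x y] by (simp add: zero_less_mult_iff)
  have "bit_gmi_integrand j s (lb j x) y \<le> ln (1 / pmf (PB j) (lb j x))"
    using bit_ratio_bounds[OF x y pos j, of s] p by (subst ln_le_cancel_iff) auto
  then show ?thesis using p by (simp add: ln_div)
qed

lemma joint_sym_density_measurable:
  "(\<lambda>(x, y). ennreal (P x * W x y)) \<in> borel_measurable (count_space X \<Otimes>\<^sub>M N)"
proof (rule measurable_pair_measure_countable1)
  show "countable X" using finite_symbols by (rule countable_finite)
  fix x assume "x \<in> X"
  note [measurable] = W_measurable[OF this]
  show "(\<lambda>y. case (x, y) of (x, y) \<Rightarrow> ennreal (P x * W x y)) \<in> borel_measurable N" by simp
qed

lemma borel_measurable_joint_sym: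
  assumes "\<And>x. x \<in> X \<Longrightarrow> (\<lambda>y. f (x, y)) \<in> borel_measurable N"
  shows "f \<in> borel_measurable (joint_sym X m mu PB W N)"
  unfolding joint_sym_def measurable_density_eq1
  by (rule measurable_pair_measure_countable1) (use assms finite_symbols countable_finite in auto)

lemma nn_integral_bit_gmi_integrand_finite:
  assumes j: "j \<in> {1..m}"
  shows "(\<integral>\<^sup>+ z. ennreal ((\<lambda>(x, y). bit_gmi_integrand j s (lb j x) y) z) \<partial>joint_sym X m mu PB W N) < \<infinity>"
proof -
  define c where "c x = - ln (pmf (PB j) (lb j x))" for x
  have "(\<integral>\<^sup>+ z. ennreal ((\<lambda>(x, y). bit_gmi_integrand j s (lb j x) y) z) \<partial>joint_sym X m mu PB W N)
      = (\<Sum>x\<in>X. \<integral>\<^sup>+ y. ennreal (P x * W x y) * ennreal (bit_gmi_integrand j s (lb j x) y) \<partial>N)"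
    by (simp add: nn_integral_joint_sym)
  also have "\<dots> \<le> (\<Sum>x\<in>X. \<integral>\<^sup>+ y. ennreal (P x) * ennreal (c x) * ennreal (W x y) \<partial>N)"
  proof (intro sum_mono nn_integral_mono)
    fix x y assume x: "x \<in> X" and y: "y \<in> space N"
    show "ennreal (P x * W x y) * ennreal (bit_gmi_integrand j s (lb j x) y)
        \<le> ennreal (P x) * ennreal (c x) * ennreal (W x y)"
    proof (cases "0 < P x * W x y")
      case True
      then have "ennreal (bit_gmi_integrand j s (lb j x) y) \<le> ennreal (c x)"
        unfolding c_def using bit_gmi_integrand_le[OF x y True j] by (intro ennreal_leI)
      then have "ennreal (P x * W x y) * ennreal (bit_gmi_integrand j s (lb j x) y)
          \<le> ennreal (P x * W x y) * ennreal (c x)"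
        by (rule mult_left_mono) simp
      then show ?thesis
        using PXbicm_nonneg W_nonneg[OF x y] by (simp add: ennreal_mult ac_simps)
    next
      case False
      then show ?thesis by (simp add: ennreal_neg)
    qed
  qed
  also have "\<dots> = (\<Sum>x\<in>X. ennreal (P x) * ennreal (c x))"
    using W_measurable W_prob by (simp add: nn_integral_cmult)
  also have "\<dots> < \<infinity>"
    using finite_symbols by (simp add: ennreal_mult_less_top)
  finally show ?thesis .
qed

lemma eexpect_symbol_gmi_integrand_eq_sum:
  "eexpect (joint_sym X m mu PB W N) (\<lambda>(x, y). symbol_gmi_integrand s x y)
     = (\<Sum>j\<in>{1..m}. eexpect (joint_sym X m mu PB W N) (\<lambda>(x, y). bit_gmi_integrand j s (lb j x) y))"
proof (rule eexpect_sum)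
  have "AE z in count_space X \<Otimes>\<^sub>M N. 0 < P (fst z) * W (fst z) (snd z) \<longrightarrow>
      symbol_gmi_integrand s (fst z) (snd z) = (\<Sum>j\<in>{1..m}. bit_gmi_integrand j s (lb j (fst z)) (snd z))"
    by (intro AE_I2) (auto simp: space_pair_measure symbol_gmi_integrand_eq_sum)
  then show "AE z in joint_sym X m mu PB W N. (\<lambda>(x, y). symbol_gmi_integrand s x y) z
      = (\<Sum>j\<in>{1..m}. (\<lambda>(x, y). bit_gmi_integrand j s (lb j x) y) z)"
    unfolding joint_sym_def
    by (subst AE_density[OF joint_sym_density_measurable]) (auto simp: case_prod_beta)
qed (use nn_integral_bit_gmi_integrand_finite in \<open>auto intro!: borel_measurable_joint_sym\<close>)

end

theorem theorem1:
  fixes X :: "'x set" and m :: nat and mu :: "(nat \<Rightarrow> bool) \<Rightarrow> 'x"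
    and PB :: "nat \<Rightarrow> bool pmf" and N :: "'y measure" and W :: "'x \<Rightarrow> 'y \<Rightarrow> real"
  assumes lab: "bij_betw mu (bitvecs m) X"
    and sf: "sigma_finite_measure N"
    and W_meas: "\<And>x. x \<in> X \<Longrightarrow> W x \<in> borel_measurable N"
    and W_nonneg: "\<And>x y. x \<in> X \<Longrightarrow> y \<in> space N \<Longrightarrow> 0 \<le> W x y"
    and W_prob: "\<And>x. x \<in> X \<Longrightarrow> (\<integral>\<^sup>+ y. ennreal (W x y) \<partial>N) = 1"
  shows "Rgmi X m mu PB W N =
      (SUP s\<in>{0<..}. (\<Sum>j\<in>{1..m}. eexpect (joint_bit X m mu PB W N j)
         (\<lambda>(b,y). ln (qbit X m mu PB W j b y powr s /
            (\<Sum>b'\<in>UNIV. qbit X m mu PB W j b' y powr s * pmf (PB j) b')))))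
   \<and> Rgmi X m mu PB W N =
      (SUP s\<in>{0<..}. (\<Sum>j\<in>{1..m}. eexpect (joint_sym X m mu PB W N)
         (\<lambda>(x,y). ln (qbit X m mu PB W j (lbit m mu j x) y powr s /
            (\<Sum>b'\<in>UNIV. qbit X m mu PB W j b' y powr s * pmf (PB j) b')))))"
proof -
  interpret bicm_channel X m mu PB N W
    by (rule bicm_channel.intro[OF lab sf W_meas W_nonneg W_prob])
  have symbolwise: "Rgmi X m mu PB W N = (SUP s\<in>{0<..}. (\<Sum>j\<in>{1..m}.
      eexpect (joint_sym X m mu PB W N) (\<lambda>(x, y). bit_gmi_integrand j s (lb j x) y)))"
    unfolding Rgmi_def by (intro SUP_cong refl eexpect_symbol_gmi_integrand_eq_sum)
  have bitwise: "eexpect (joint_bit X m mu PB W N j) (\<lambda>(b, y). bit_gmi_integrand j s b y)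
      = eexpect (joint_sym X m mu PB W N) (\<lambda>(x, y). bit_gmi_integrand j s (lb j x) y)"
    if "j \<in> {1..m}" for j s
    using eexpect_joint_bit_eq_joint_sym[OF that, of "\<lambda>(b, y). bit_gmi_integrand j s b y"]
    by (simp add: case_prod_unfold)
  have "(SUP s\<in>{0<..}. (\<Sum>j\<in>{1..m}.
      eexpect (joint_bit X m mu PB W N j) (\<lambda>(b, y). bit_gmi_integrand j s b y)))
    = (SUP s\<in>{0<..}. (\<Sum>j\<in>{1..m}.
      eexpect (joint_sym X m mu PB W N) (\<lambda>(x, y). bit_gmi_integrand j s (lb j x) y)))"
    by (intro SUP_cong sum.cong refl bitwise)
  then show ?thesis using symbolwise by simp
qed

end
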